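(* Let $p\neq2$ be a prime and let $a_2,a_3,b_2,b_3$ be nonzero elements of the field $\mathbb{Z}(p)$ of integers modulo $p$ with $a_2b_3=a_3b_2$. Then there exist independent $\mathbb{Z}(p)$-valued random variables $\xi_1,\xi_2,\xi_3,\xi_4$ with nowhere-vanishing characteristic functions, with $\xi_2$ and $\xi_3$ identically distributed, and independent $\mathbb{Z}(p)$-valued random variables $\eta_1,\eta_2,\eta_3,\eta_4$ with nowhere-vanishing characteristic functions, with $\eta_2$ and $\eta_3$ identically distributed, such that $(\xi_1+a_2\xi_2+a_3\xi_3,\ b_2\xi_2+b_3\xi_3+\xi_4)$ and $(\eta_1+a_2\eta_2+a_3\eta_3,\ b_2\eta_2+b_3\eta_3+\eta_4)$ have the same distribution, but the distribution of $\eta_2$ is not equal to the distribution of $\xi_2+\alpha$ for any $\alpha\in\mathbb{Z}(p)$.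
   Context: The character group of the additive group of $\mathbb{Z}(p)$ is isomorphic to $\mathbb{Z}(p)$; write $(x,y)$ for the value of the character $y$ at $x$. The characteristic function of a $\mathbb{Z}(p)$-valued random variable $\xi$ is $y\mapsto\mathbf{E}[(\xi,y)]$ on the character group; "nowhere-vanishing" means it is nonzero at every $y$. *)

theory Defs
  imports "HOL-Probability.Probability" "Berlekamp_Zassenhaus.Finite_Field"
begin

text \<open>The field Z(p) is the type 'p mod_ring with CARD('p) = p prime.
  The character group of Z(p) is identified with Z(p): the value of the
  character y at x is exp(2 pi i x y / p).\<close>

definition zp_char :: "'p::prime_card mod_ring \<Rightarrow> 'p mod_ring \<Rightarrow> complex" where
  "zp_char x y = cis (2 * pi * real_of_int (to_int_mod_ring (x * y)) / real CARD('p))"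

definition zp_charfun :: "'a measure \<Rightarrow> ('a \<Rightarrow> 'p::prime_card mod_ring) \<Rightarrow> 'p mod_ring \<Rightarrow> complex" where
  "zp_charfun M X y = prob_space.expectation M (\<lambda>\<omega>. zp_char (X \<omega>) y)"

end

theory Submission
  imports Defs "HOL-Library.Real_Mod"
begin

text \<open>
  Take \<open>\<xi>\<^sub>1 = \<xi>\<^sub>4 = \<eta>\<^sub>1 = \<eta>\<^sub>4 = 0\<close>, let \<open>\<xi>\<^sub>2, \<xi>\<^sub>3\<close> be i.i.d. with law
  \<open>\<mu> = s \<delta>\<^sub>0 + (1 - s) \<lambda>\<close> and \<open>\<eta>\<^sub>2, \<eta>\<^sub>3\<close> i.i.d. with law \<open>\<nu> = - s \<delta>\<^sub>0 + (1 + s) \<lambda>\<close>,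
  where \<open>\<lambda>\<close> is the uniform distribution on \<open>Z(p)\<close> and \<open>s = 1 / (p - 1)\<close> is chosen so that
  \<open>\<nu>(0) = 0\<close>. Away from 0 the characteristic functions are \<open>s\<close> and \<open>-s\<close>.
  Since \<open>a\<^sub>2 b\<^sub>3 = a\<^sub>3 b\<^sub>2\<close>, the second component of each pair is \<open>b\<^sub>2 / a\<^sub>2\<close> times the first;
  as dilations fix \<open>\<delta>\<^sub>0\<close> and \<open>\<lambda>\<close>, the first component has law \<open>s\<^sup>2 \<delta>\<^sub>0 + (1 - s\<^sup>2) \<lambda>\<close>
  in both cases. Finally \<open>p \<noteq> 2\<close> gives \<open>s < 1\<close>, so every translate of \<open>\<mu>\<close> charges every
  point, whereas \<open>\<nu>(0) = 0\<close>.
\<close>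

lemma cis_2pi_mod:
  assumes "0 < n"
  shows "cis (2 * pi * of_int (k mod n) / of_int n) = cis (2 * pi * of_int k / of_int n)"
proof -
  have "2 * pi * of_int (k mod n) / of_int n = 2 * pi * of_int k / of_int n + 2 * pi * of_int (- (k div n))"
    using assms by (simp add: minus_div_mult_eq_mod [symmetric] field_simps)
  then show ?thesis
    by (simp flip: cis_divide)
qed

lemma zp_char_0_left [simp]: "zp_char 0 y = 1"
  and zp_char_0_right [simp]: "zp_char x 0 = 1"
  by (simp_all add: zp_char_def)

lemma zp_char_add: "zp_char (x + z) y = zp_char x y * zp_char z y"
proof -
  have "int CARD('a) > 0"
    by simp
  then show ?thesis
    unfolding zp_char_def distrib_right to_int_mod_ring_add
    using cis_2pi_mod[of "int CARD('a)"] by (simp add: cis_mult add_divide_distrib distrib_left)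
qed

lemma zp_char_one_neq_1:
  assumes "y \<noteq> 0"
  shows "zp_char 1 y \<noteq> 1"
proof
  assume "zp_char 1 y = 1"
  then obtain m :: int where "2 * pi * to_int_mod_ring y / CARD('a) = m * (2 * pi)"
    by (auto simp: zp_char_def cis_eq_1_iff)
  then have "real_of_int (to_int_mod_ring y) = real_of_int m * real CARD('a)"
    by (simp add: field_simps)
  then have "to_int_mod_ring y = m * CARD('a)"
    by (metis of_int_eq_iff of_int_mult of_int_of_nat_eq)
  moreover have "0 < to_int_mod_ring y" "to_int_mod_ring y < CARD('a)"
    using assms range_to_int_mod_ring[where 'a='a] by (auto simp: order_le_less)
  ultimately show False
    by (smt (verit) mult_le_cancel_right1 zero_less_mult_pos2)
qed

lemma sum_zp_char_eq_0:
  assumes "y \<noteq> 0"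
  shows "(\<Sum>x\<in>UNIV. zp_char x y) = 0"
proof -
  define S where "S = (\<Sum>x\<in>UNIV. zp_char x y)"
  have "S = (\<Sum>x\<in>UNIV. zp_char (x + 1) y)"
    unfolding S_def by (rule sum.reindex_bij_witness[of _ "\<lambda>x. x + 1" "\<lambda>x. x - 1"]) auto
  also have "\<dots> = S * zp_char 1 y"
    by (simp add: S_def zp_char_add sum_distrib_right)
  finally have "S * (1 - zp_char 1 y) = 0"
    by (simp add: algebra_simps)
  with zp_char_one_neq_1[OF assms] show ?thesis
    by (simp add: S_def)
qed

lemma zp_charfun_measure_pmf:
  "zp_charfun (measure_pmf q) X y = measure_pmf.expectation (map_pmf X q) (\<lambda>x. zp_char x y)"
  by (simp add: zp_charfun_def)

text \<open>\<open>A \<delta>\<^sub>0 + (1 - A) \<lambda>\<close> with \<open>\<lambda>\<close> uniform: a genuine distribution as soon as \<open>A \<le> 1\<close> and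
  its weight at 0 is nonnegative, so \<open>A\<close> may be negative.\<close>

definition unif_zero_pmf :: "real \<Rightarrow> 'a::{finite,zero} pmf" where
  "unif_zero_pmf A = embed_pmf (\<lambda>x. (if x = 0 then A else 0) + (1 - A) / CARD('a))"

lemma pmf_unif_zero_pmf:
  assumes "A \<le> 1" "0 \<le> A + (1 - A) / CARD('a)"
  shows "pmf (unif_zero_pmf A :: 'a::{finite,zero} pmf) x = (if x = 0 then A else 0) + (1 - A) / CARD('a)"
  unfolding unif_zero_pmf_def
proof (rule pmf_embed_pmf)
  define f :: "'a \<Rightarrow> real" where "f x = (if x = 0 then A else 0) + (1 - A) / CARD('a)" for x
  show nonneg: "0 \<le> f x" for x
    using assms by (simp add: f_def)
  have "(\<Sum>x\<in>UNIV. f x) = 1"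
    by (simp add: f_def sum.distrib)
  then show "(\<integral>\<^sup>+x. ennreal (f x) \<partial>count_space UNIV) = 1"
    using nonneg by (simp add: nn_integral_count_space_finite sum_ennreal)
qed

lemma map_pmf_unif_zero_pmf:
  fixes f :: "'a::{finite,zero} \<Rightarrow> 'a"
  assumes "bij f" "f 0 = 0" "A \<le> 1" "0 \<le> A + (1 - A) / CARD('a)"
  shows "map_pmf f (unif_zero_pmf A) = unif_zero_pmf A"
proof (rule pmf_eqI)
  fix z
  obtain x where z: "z = f x"
    using assms(1) by (metis bij_pointE)
  have "f x = 0 \<longleftrightarrow> x = 0"
    using assms(1,2) by (metis bij_pointE)
  then show "pmf (map_pmf f (unif_zero_pmf A)) z = pmf (unif_zero_pmf A) z"
    using assms(1) unfolding z
    by (simp add: pmf_map_inj' bij_is_inj pmf_unif_zero_pmf[OF assms(3,4)])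
qed

lemma pmf_map_add_pair_pmf:
  "pmf (map_pmf (\<lambda>(x, y). x + y) (pair_pmf p q)) z = (\<Sum>x\<in>UNIV. pmf p x * pmf q (z - x))"
  for p q :: "'a::{finite,ab_group_add} pmf"
proof -
  have "(\<lambda>(x, y). x + y) -` {z} = range (\<lambda>x. (x, z - x))"
    by (auto simp: image_iff algebra_simps)
  then have "pmf (map_pmf (\<lambda>(x, y). x + y) (pair_pmf p q)) z
      = (\<Sum>w\<in>range (\<lambda>x. (x, z - x)). pmf (pair_pmf p q) w)"
    by (simp add: pmf_map measure_measure_pmf_finite)
  also have "\<dots> = (\<Sum>x\<in>UNIV. pmf p x * pmf q (z - x))"
    by (subst sum.reindex) (auto simp: inj_on_def pmf_pair)
  finally show ?thesis .
qed

lemma pmf_map_add_pair_unif_zero_pmf: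
  fixes A B :: real
  defines "n \<equiv> real CARD('a::{finite,ab_group_add})"
  assumes "A \<le> 1" "0 \<le> A + (1 - A) / n" "B \<le> 1" "0 \<le> B + (1 - B) / n"
  shows "pmf (map_pmf (\<lambda>(x, y). x + y) (pair_pmf (unif_zero_pmf A) (unif_zero_pmf B))) (z::'a)
    = (if z = 0 then A * B else 0) + (1 - A * B) / n"
proof -
  have "n > 0"
    by (simp add: n_def)
  have "pmf (unif_zero_pmf A) x * pmf (unif_zero_pmf B) (z - x)
      = (if x = 0 then A * ((if z = 0 then B else 0) + (1 - B) / n) else 0)
        + (if x = z then (1 - A) / n * B else 0) + (1 - A) / n * ((1 - B) / n)" for x
    using assms by (simp add: n_def pmf_unif_zero_pmf algebra_simps)
  then have "pmf (map_pmf (\<lambda>(x, y). x + y) (pair_pmf (unif_zero_pmf A) (unif_zero_pmf B))) z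
      = A * ((if z = 0 then B else 0) + (1 - B) / n) + (1 - A) / n * B + n * ((1 - A) / n * ((1 - B) / n))"
    by (simp add: pmf_map_add_pair_pmf sum.distrib n_def)
  also have "\<dots> = (if z = 0 then A * B else 0) + (1 - A * B) / n"
    using \<open>n > 0\<close> by (simp add: field_simps)
  finally show ?thesis .
qed

lemma map_pmf_linear_pair_unif_zero_pmf:
  fixes c d :: "'a::{finite,field}"
  assumes "c \<noteq> 0" "d \<noteq> 0"
    and "A \<le> 1" "0 \<le> A + (1 - A) / CARD('a)" "B \<le> 1" "0 \<le> B + (1 - B) / CARD('a)"
  shows "map_pmf (\<lambda>(x, y). c * x + d * y) (pair_pmf (unif_zero_pmf A) (unif_zero_pmf B))
    = map_pmf (\<lambda>(x, y). x + y) (pair_pmf (unif_zero_pmf A) (unif_zero_pmf B))"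
proof -
  have bij_scale: "bij ((*) e)" if "e \<noteq> 0" for e :: 'a
    using that by (intro o_bij[of "\<lambda>x. x / e"]) (auto simp: fun_eq_iff)
  have "map_pmf (\<lambda>(x, y). c * x + d * y) (pair_pmf (unif_zero_pmf A) (unif_zero_pmf B))
      = map_pmf (\<lambda>(x, y). x + y)
          (map_pmf (\<lambda>(x, y). (c * x, d * y)) (pair_pmf (unif_zero_pmf A) (unif_zero_pmf B)))"
    by (simp add: pmf.map_comp case_prod_unfold o_def)
  also have "\<dots> = map_pmf (\<lambda>(x, y). x + y) (pair_pmf (unif_zero_pmf A) (unif_zero_pmf B))"
    using assms by (simp add: map_pair map_pmf_unif_zero_pmf bij_scale)
  finally show ?thesis .
qed

lemma expectation_zp_char_unif_zero_pmf:
  fixes y :: "'p::prime_card mod_ring"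
  assumes "A \<le> 1" "0 \<le> A + (1 - A) / CARD('p)"
  shows "measure_pmf.expectation (unif_zero_pmf A) (\<lambda>x. zp_char x y) = (if y = 0 then 1 else A)"
proof -
  have "measure_pmf.expectation (unif_zero_pmf A) (\<lambda>x. zp_char x y)
      = (\<Sum>x\<in>UNIV. pmf (unif_zero_pmf A) x *\<^sub>R zp_char x y)"
    by (rule integral_measure_pmf[where A = UNIV]) simp_all
  also have "\<dots> = (\<Sum>x\<in>UNIV. (if x = 0 then of_real A else 0) + of_real ((1 - A) / CARD('p)) * zp_char x y)"
    using assms by (intro sum.cong) (auto simp: pmf_unif_zero_pmf scaleR_conv_of_real distrib_right)
  also have "\<dots> = A + of_real ((1 - A) / CARD('p)) * (\<Sum>x\<in>UNIV. zp_char x y)"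
    by (simp add: sum.distrib sum_distrib_left)
  also have "\<dots> = (if y = 0 then 1 else complex_of_real A)"
    by (simp add: sum_zp_char_eq_0)
  finally show ?thesis .
qed

lemma unif_zero_pmf_neq_translate:
  fixes \<alpha> :: "'a::{finite,ab_group_add}"
  assumes "0 \<le> A" "A < 1" "B \<le> 1" "B + (1 - B) / CARD('a) = 0"
  shows "unif_zero_pmf B \<noteq> map_pmf (\<lambda>x. x + \<alpha>) (unif_zero_pmf A)"
proof
  assume "unif_zero_pmf B = map_pmf (\<lambda>x. x + \<alpha>) (unif_zero_pmf A)"
  then have "pmf (unif_zero_pmf B) (- \<alpha> + \<alpha>)
      = pmf (map_pmf (\<lambda>x. x + \<alpha>) (unif_zero_pmf A)) (- \<alpha> + \<alpha>)"
    by (simp only:)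
  also have "\<dots> = pmf (unif_zero_pmf A) (- \<alpha>)"
    by (rule pmf_map_inj') (simp add: inj_on_def)
  moreover have "0 < (1 - A) / CARD('a)"
    using assms(2) by simp
  then have "0 < pmf (unif_zero_pmf A) (- \<alpha>)"
    using assms(1,2) by (simp add: pmf_unif_zero_pmf add_nonneg_pos)
  moreover have "pmf (unif_zero_pmf B :: 'a pmf) 0 = 0"
    using assms(3,4) by (simp add: pmf_unif_zero_pmf)
  ultimately show False
    by simp
qed

lemma map_pmf_Pi_pmf_pair:
  assumes "finite I" "i \<in> I" "j \<in> I" "i \<noteq> j"
  shows "map_pmf (\<lambda>f. (f i, f j)) (Pi_pmf I d Q) = pair_pmf (Q i) (Q j)"
proof -
  define J where "J = I - {i, j}"
  have I: "I = insert i (insert j J)" and J: "finite J" "i \<notin> insert j J" "j \<notin> J"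
    using assms by (auto simp: J_def)
  show ?thesis
    unfolding I using J assms(4)
    by (simp add: Pi_pmf_insert' pair_pmf_def map_bind_pmf bind_assoc_pmf bind_return_pmf bind_pmf_const)
qed

lemma indep_vars_Pi_pmf_superset:
  assumes "finite I" "J \<subseteq> I"
  shows "prob_space.indep_vars (measure_pmf (Pi_pmf J d Q)) (\<lambda>_. count_space UNIV) (\<lambda>i f. f i) I"
proof -
  have "Pi_pmf J d Q = Pi_pmf I d (\<lambda>i. if i \<in> J then Q i else return_pmf d)"
    using assms by (simp add: Pi_pmf_if_set Int_absorb1 Collect_conj_eq[symmetric] Int_def[symmetric])
  then show ?thesis
    using indep_vars_Pi_pmf[OF assms(1)] by simp
qed

definition coord_model :: "'a pmf \<Rightarrow> (nat \<Rightarrow> 'a::zero) measure" where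
  "coord_model q = measure_pmf (Pi_pmf {2, 3} 0 (\<lambda>_. q))"

lemma prob_space_coord_model: "prob_space (coord_model q)"
  by (simp add: coord_model_def measure_pmf.prob_space_axioms)

lemma indep_vars_coord_model:
  "prob_space.indep_vars (coord_model q) (\<lambda>_. count_space UNIV) (\<lambda>i \<omega>. \<omega> i) {1, 2, 3, 4}"
  unfolding coord_model_def by (rule indep_vars_Pi_pmf_superset) auto

lemma distr_coord_model:
  "distr (coord_model q) (count_space UNIV) (\<lambda>\<omega>. \<omega> i)
    = measure_pmf (if i \<in> {2, 3} then q else return_pmf 0)"
  by (simp add: coord_model_def map_pmf_rep_eq[symmetric] Pi_pmf_component)

lemma distr_coord_model_2_eq_3:
  "distr (coord_model q) (count_space UNIV) (\<lambda>\<omega>. \<omega> 2)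
    = distr (coord_model q) (count_space UNIV) (\<lambda>\<omega>. \<omega> 3)"
  by (simp add: distr_coord_model)

lemma distr_coord_model_translate:
  assumes "i \<in> {2, 3}"
  shows "distr (coord_model q) (count_space UNIV) (\<lambda>\<omega>. \<omega> i + \<alpha>)
    = measure_pmf (map_pmf (\<lambda>x. x + \<alpha>) q)"
proof -
  have "map_pmf (\<lambda>\<omega>. \<omega> i + \<alpha>) (Pi_pmf {2, 3} 0 (\<lambda>_. q))
      = map_pmf (\<lambda>x. x + \<alpha>) (map_pmf (\<lambda>\<omega>. \<omega> i) (Pi_pmf {2, 3} 0 (\<lambda>_. q)))"
    by (simp add: pmf.map_comp o_def)
  then show ?thesis
    using assms by (simp add: coord_model_def map_pmf_rep_eq[symmetric] Pi_pmf_component del: pmf.map_comp)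
qed

lemma zp_charfun_coord_model:
  "zp_charfun (coord_model q) (\<lambda>\<omega>. \<omega> i) y
    = (if i \<in> {2, 3} then measure_pmf.expectation q (\<lambda>x. zp_char x y) else 1)"
  by (simp add: coord_model_def zp_charfun_measure_pmf Pi_pmf_component)

lemma distr_coord_model_linear_pair:
  fixes a2 a3 b2 b3 :: "'a::field"
  assumes "a2 \<noteq> 0" "a2 * b3 = a3 * b2"
  shows "distr (coord_model q) (count_space UNIV)
      (\<lambda>\<omega>. (\<omega> 1 + a2 * \<omega> 2 + a3 * \<omega> 3, b2 * \<omega> 2 + b3 * \<omega> 3 + \<omega> 4))
    = measure_pmf (map_pmf (\<lambda>t. (t, b2 / a2 * t)) (map_pmf (\<lambda>(x, y). a2 * x + a3 * y) (pair_pmf q q)))"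
proof -
  have proportional: "b2 * x + b3 * y = b2 / a2 * (a2 * x + a3 * y)" for x y
    using assms by (simp add: field_simps)
  have "map_pmf (\<lambda>\<omega>. (\<omega> 1 + a2 * \<omega> 2 + a3 * \<omega> 3, b2 * \<omega> 2 + b3 * \<omega> 3 + \<omega> 4))
      (Pi_pmf {2::nat, 3} 0 (\<lambda>_. q))
    = map_pmf (\<lambda>(x, y). (a2 * x + a3 * y, b2 / a2 * (a2 * x + a3 * y)))
      (map_pmf (\<lambda>\<omega>. (\<omega> 2, \<omega> 3)) (Pi_pmf {2::nat, 3} 0 (\<lambda>_. q)))"
    unfolding pmf.map_comp
    by (intro map_pmf_cong refl) (auto simp: proportional dest: set_Pi_pmf_subset[THEN subsetD, rotated])
  also have "\<dots> = map_pmf (\<lambda>t. (t, b2 / a2 * t)) (map_pmf (\<lambda>(x, y). a2 * x + a3 * y) (pair_pmf q q))"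
    by (simp add: map_pmf_Pi_pmf_pair pmf.map_comp o_def case_prod_unfold)
  finally show ?thesis
    by (simp add: coord_model_def map_pmf_rep_eq[symmetric])
qed

theorem proposition4p2:
  fixes a2 a3 b2 b3 :: "'p::prime_card mod_ring"
  assumes "CARD('p) \<noteq> 2"
    and "a2 \<noteq> 0" and "a3 \<noteq> 0" and "b2 \<noteq> 0" and "b3 \<noteq> 0"
    and "a2 * b3 = a3 * b2"
  shows "\<exists>(M :: (nat \<Rightarrow> 'p mod_ring) measure) (N :: (nat \<Rightarrow> 'p mod_ring) measure)
            (\<xi> :: nat \<Rightarrow> (nat \<Rightarrow> 'p mod_ring) \<Rightarrow> 'p mod_ring)
            (\<eta> :: nat \<Rightarrow> (nat \<Rightarrow> 'p mod_ring) \<Rightarrow> 'p mod_ring).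
     prob_space M \<and> prob_space N \<and>
     prob_space.indep_vars M (\<lambda>_. count_space UNIV) \<xi> {1, 2, 3, 4} \<and>
     prob_space.indep_vars N (\<lambda>_. count_space UNIV) \<eta> {1, 2, 3, 4} \<and>
     (\<forall>i\<in>{1, 2, 3, 4}. \<forall>y. zp_charfun M (\<xi> i) y \<noteq> 0) \<and>
     (\<forall>i\<in>{1, 2, 3, 4}. \<forall>y. zp_charfun N (\<eta> i) y \<noteq> 0) \<and>
     distr M (count_space UNIV) (\<xi> 2) = distr M (count_space UNIV) (\<xi> 3) \<and>
     distr N (count_space UNIV) (\<eta> 2) = distr N (count_space UNIV) (\<eta> 3) \<and>
     distr M (count_space UNIV)
       (\<lambda>\<omega>. (\<xi> 1 \<omega> + a2 * \<xi> 2 \<omega> + a3 * \<xi> 3 \<omega>, b2 * \<xi> 2 \<omega> + b3 * \<xi> 3 \<omega> + \<xi> 4 \<omega>))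
     = distr N (count_space UNIV)
       (\<lambda>\<omega>. (\<eta> 1 \<omega> + a2 * \<eta> 2 \<omega> + a3 * \<eta> 3 \<omega>, b2 * \<eta> 2 \<omega> + b3 * \<eta> 3 \<omega> + \<eta> 4 \<omega>)) \<and>
     (\<forall>\<alpha>. distr N (count_space UNIV) (\<eta> 2)
            \<noteq> distr M (count_space UNIV) (\<lambda>\<omega>. \<xi> 2 \<omega> + \<alpha>))"
proof -
  define p where "p = real CARD('p)"
  have "p > 2"
    using prime_ge_2_nat[OF prime_card[where 'a='p]] assms(1) by (simp add: p_def)
  define s where "s = 1 / (p - 1)"
  have s: "0 < s" "s < 1" "- s + (1 + s) / p = 0"
    using \<open>p > 2\<close> by (auto simp: s_def field_simps)
  have valid: "s \<le> 1" "0 \<le> s + (1 - s) / p" "- s \<le> 1" "0 \<le> - s + (1 - - s) / p"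
    using s \<open>p > 2\<close> by auto
  define \<mu> where "\<mu> = (unif_zero_pmf s :: 'p mod_ring pmf)"
  define \<nu> where "\<nu> = (unif_zero_pmf (- s) :: 'p mod_ring pmf)"
  have linear_law: "map_pmf (\<lambda>(x, y). a2 * x + a3 * y) (pair_pmf \<mu> \<mu>)
    = map_pmf (\<lambda>(x, y). a2 * x + a3 * y) (pair_pmf \<nu> \<nu>)"
    using valid assms(2,3) unfolding p_def \<mu>_def \<nu>_def
    by (intro pmf_eqI) (simp add: map_pmf_linear_pair_unif_zero_pmf pmf_map_add_pair_unif_zero_pmf)
  have not_translate: "distr (coord_model \<nu>) (count_space UNIV) (\<lambda>\<omega>. \<omega> 2)
      \<noteq> distr (coord_model \<mu>) (count_space UNIV) (\<lambda>\<omega>. \<omega> 2 + \<alpha>)" for \<alpha>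
    using unif_zero_pmf_neq_translate[of s "- s" \<alpha>] s valid
    by (simp add: distr_coord_model distr_coord_model_translate measure_pmf_inject \<mu>_def \<nu>_def p_def)
  have pair_law: "distr (coord_model \<mu>) (count_space UNIV)
      (\<lambda>\<omega>. (\<omega> 1 + a2 * \<omega> 2 + a3 * \<omega> 3, b2 * \<omega> 2 + b3 * \<omega> 3 + \<omega> 4))
    = distr (coord_model \<nu>) (count_space UNIV)
      (\<lambda>\<omega>. (\<omega> 1 + a2 * \<omega> 2 + a3 * \<omega> 3, b2 * \<omega> 2 + b3 * \<omega> 3 + \<omega> 4))"
    unfolding distr_coord_model_linear_pair[OF assms(2,6)] linear_law ..
  have charfun_neq_0:
    "\<forall>i\<in>{1, 2, 3, 4}. \<forall>y. zp_charfun (coord_model \<mu>) (\<lambda>\<omega>. \<omega> i) y \<noteq> 0"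
    "\<forall>i\<in>{1, 2, 3, 4}. \<forall>y. zp_charfun (coord_model \<nu>) (\<lambda>\<omega>. \<omega> i) y \<noteq> 0"
    using s valid
    by (simp_all add: zp_charfun_coord_model expectation_zp_char_unif_zero_pmf \<mu>_def \<nu>_def p_def)
  show ?thesis
    by (rule exI[of _ "coord_model \<mu>"], rule exI[of _ "coord_model \<nu>"], (rule exI[of _ "\<lambda>i \<omega>. \<omega> i"])+,
        intro conjI allI prob_space_coord_model indep_vars_coord_model distr_coord_model_2_eq_3
          charfun_neq_0 pair_law not_translate)
qed

end
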